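(* Let $n,b$ be integers with $1<n<b$, let $p=(d_k,\ldots,d_0)_b=n\cdot(d_{\sigma(k)},\ldots,d_{\sigma(0)})_b$ be an $(n,b,\sigma)$-permutiple with carries $c_0=0,c_1,\ldots,c_k$, let $S=\bigl((c_0,c_1),(c_1,c_2),\ldots,(c_{k-1},c_k),(c_k,c_0)\bigr)$ be its state-transition sequence, and let $s=(d_0,d_{\sigma(0)})(d_1,d_{\sigma(1)})\cdots(d_k,d_{\sigma(k)})$ be its permutiple string. If $\varphi$ is a symmetry of $p$, then the state-transition sequence of the permutiple string $$s_\varphi=(d_{\varphi(0)},d_{\sigma\varphi(0)})(d_{\varphi(1)},d_{\sigma\varphi(1)})\cdots(d_{\varphi(k)},d_{\sigma\varphi(k)})$$ is $S_\varphi=\bigl((c_{\varphi(0)},c_{\varphi(1)}),(c_{\varphi(1)},c_{\varphi(2)}),\ldots,(c_{\varphi(k-1)},c_{\varphi(k)}),(c_{\varphi(k)},c_{\varphi(0)})\bigr)$.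
   Context: For digits $0\le e_i<b$, $(e_k,\ldots,e_0)_b=\sum_i e_ib^i$ (leading zero digits allowed). For a permutation $\tau$ of $\{0,\ldots,k\}$, $(e_k,\ldots,e_0)_b$ is an $(n,b,\tau)$-permutiple if $(e_k,\ldots,e_0)_b=n\cdot(e_{\tau(k)},\ldots,e_{\tau(0)})_b$. Its carries are $c'_0=0$, $c'_{i+1}=\lfloor (ne_{\tau(i)}+c'_i)/b\rfloor$ for $0\le i\le k$ (one has $c'_{k+1}=0$, and $c'_i\le n-1$). Its permutiple string is the word $(e_0,e_{\tau(0)})(e_1,e_{\tau(1)})\cdots(e_k,e_{\tau(k)})$ of ordered digit pairs, and the state-transition sequence of this string is $\bigl((c'_0,c'_1),\ldots,(c'_{k-1},c'_k),(c'_k,c'_{k+1})\bigr)$, where $c'_{k+1}=0=c'_0$: the $i$-th input $(e_i,e_{\tau(i)})$ induces the transition from carry $c'_i$ to carry $c'_{i+1}$ (these satisfy $n e_{\tau(i)}-e_i+c'_i=b c'_{i+1}$). A permutation $\varphi$ of $\{0,\ldots,k\}$ is a symmetry of $p$ if reordering the inputs of $s$ by $\varphi$ gives again a permutiple string, i.e. $(d_{\varphi(k)},\ldots,d_{\varphi(0)})_b=n\cdot(d_{\sigma\varphi(k)},\ldots,d_{\sigma\varphi(0)})_b$, so that $s_\varphi$ is the permutiple string of this $(n,b,\varphi^{-1}\sigma\varphi)$-permutiple. *)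

theory Defs
  imports "HOL-Combinatorics.Permutations"
begin

definition digval :: "nat \<Rightarrow> nat \<Rightarrow> (nat \<Rightarrow> nat) \<Rightarrow> nat" where
  "digval b k e = (\<Sum>i\<le>k. e i * b ^ i)"

definition is_permutiple :: "nat \<Rightarrow> nat \<Rightarrow> nat \<Rightarrow> (nat \<Rightarrow> nat) \<Rightarrow> (nat \<Rightarrow> nat) \<Rightarrow> bool" where
  "is_permutiple n b k \<tau> e \<longleftrightarrow>
     (\<forall>i\<le>k. e i < b) \<and> \<tau> permutes {..k} \<and> digval b k e = n * digval b k (e \<circ> \<tau>)"

fun perm_carry :: "nat \<Rightarrow> nat \<Rightarrow> (nat \<Rightarrow> nat) \<Rightarrow> (nat \<Rightarrow> nat) \<Rightarrow> nat \<Rightarrow> nat" where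
  "perm_carry n b \<tau> e 0 = 0"
| "perm_carry n b \<tau> e (Suc i) = (n * e (\<tau> i) + perm_carry n b \<tau> e i) div b"

definition permutiple_string :: "nat \<Rightarrow> (nat \<Rightarrow> nat) \<Rightarrow> (nat \<Rightarrow> nat) \<Rightarrow> (nat \<times> nat) list" where
  "permutiple_string k \<tau> e = map (\<lambda>i. (e i, e (\<tau> i))) [0..<Suc k]"

fun word_carry :: "nat \<Rightarrow> nat \<Rightarrow> (nat \<times> nat) list \<Rightarrow> nat \<Rightarrow> nat" where
  "word_carry n b w 0 = 0"
| "word_carry n b w (Suc i) = (n * snd (w ! i) + word_carry n b w i) div b"

definition state_transitions :: "nat \<Rightarrow> nat \<Rightarrow> (nat \<times> nat) list \<Rightarrow> (nat \<times> nat) list" where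
  "state_transitions n b w =
     map (\<lambda>i. (word_carry n b w i, word_carry n b w (Suc i))) [0..<length w]"

definition is_symmetry :: "nat \<Rightarrow> nat \<Rightarrow> nat \<Rightarrow> (nat \<Rightarrow> nat) \<Rightarrow> (nat \<Rightarrow> nat) \<Rightarrow> (nat \<Rightarrow> nat) \<Rightarrow> bool" where
  "is_symmetry n b k \<sigma> d \<phi> \<longleftrightarrow>
     \<phi> permutes {..k} \<and> digval b k (d \<circ> \<phi>) = n * digval b k (d \<circ> \<sigma> \<circ> \<phi>)"

end

theory Submission
  imports Defs
begin

text \<open>Every input pair \<open>(e\<^sub>i, e\<^sub>\<tau>\<^sub>(\<^sub>i\<^sub>))\<close> of a permutiple string satisfies
  \<open>n e\<^sub>\<tau>\<^sub>(\<^sub>i\<^sub>) + c\<^sub>i = e\<^sub>i + b c\<^sub>i\<^sub>+\<^sub>1\<close>, so its incoming carry is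
  determined modulo \<open>b\<close> by the pair alone; as carries are below \<open>n < b\<close>, it is determined outright.
  Reordering the pairs by a symmetry \<open>\<phi>\<close> therefore carries every incoming carry along with its pair,
  and the cyclic closing of the sequence comes from \<open>c\<^sub>0 = c\<^sub>k\<^sub>+\<^sub>1 = 0\<close>.\<close>

fun carry :: "nat \<Rightarrow> nat \<Rightarrow> (nat \<Rightarrow> nat) \<Rightarrow> nat \<Rightarrow> nat" where
  "carry n b y 0 = 0"
| "carry n b y (Suc i) = (n * y i + carry n b y i) div b"

lemma perm_carry_eq_carry: "perm_carry n b \<tau> e = carry n b (e \<circ> \<tau>)"
proof
  show "perm_carry n b \<tau> e i = carry n b (e \<circ> \<tau>) i" for i
    by (induction i) auto
qed

lemma word_carry_eq_carry: "word_carry n b w = carry n b (\<lambda>j. snd (w ! j))"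
proof
  show "word_carry n b w i = carry n b (\<lambda>j. snd (w ! j)) i" for i
    by (induction i) auto
qed

lemma carry_cong: "(\<And>j. j < i \<Longrightarrow> y j = z j) \<Longrightarrow> carry n b y i = carry n b z i"
  by (induction i) auto

lemma carry_less:
  assumes "0 < n" and "\<forall>j<i. y j < b"
  shows "carry n b y i < n"
  using assms(2)
proof (induction i)
  case 0
  then show ?case using assms(1) by simp
next
  case (Suc i)
  then have "carry n b y i \<le> n - 1" and "y i \<le> b - 1" by auto
  then have "n * y i + carry n b y i \<le> n * (b - 1) + (n - 1)"
    by (intro add_mono mult_le_mono2)
  also have "\<dots> < n * b"
    using assms(1) Suc.prems by (cases n; cases b) (auto simp: algebra_simps)
  finally show ?case
    by (simp add: less_mult_imp_div_less mult.commute)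
qed

lemma carry_mult_expansion:
  "n * (\<Sum>i<m. y i * b ^ i) =
     (\<Sum>i<m. ((n * y i + carry n b y i) mod b) * b ^ i) + carry n b y m * b ^ m"
proof (induction m)
  case 0
  then show ?case by simp
next
  case (Suc m)
  let ?q = "n * y m + carry n b y m"
  have split: "?q * b ^ m = (?q mod b) * b ^ m + carry n b y (Suc m) * b ^ Suc m"
    by (metis add_mult_distrib carry.simps(2) mod_mult_div_eq mult.assoc mult.commute power_Suc)
  have "n * (\<Sum>i<Suc m. y i * b ^ i) = n * (\<Sum>i<m. y i * b ^ i) + n * y m * b ^ m"
    by (simp add: algebra_simps)
  also have "\<dots> = (\<Sum>i<m. ((n * y i + carry n b y i) mod b) * b ^ i) + ?q * b ^ m"
    using Suc.IH by (simp add: algebra_simps)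
  finally show ?case
    using split by simp
qed

lemma base_sum_less:
  assumes "\<forall>i<m. x i < b"
  shows "(\<Sum>i<m. x i * b ^ i) < (b::nat) ^ m"
  using assms
proof (induction m)
  case 0
  then show ?case by simp
next
  case (Suc m)
  then have "(\<Sum>i<m. x i * b ^ i) < b ^ m" and "x m \<le> b - 1" by auto
  then have "(\<Sum>i<Suc m. x i * b ^ i) < b ^ m + (b - 1) * b ^ m"
    by (simp add: add_less_le_mono mult_le_mono1)
  also have "\<dots> = b ^ Suc m"
    using Suc.prems by (cases b) (auto simp: algebra_simps)
  finally show ?case .
qed

lemma base_digits_unique:
  assumes "\<forall>i<m. x i < b" and "\<forall>i<m. z i < b"
    and "(\<Sum>i<m. x i * b ^ i) = (\<Sum>i<m. z i * (b::nat) ^ i)"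
  shows "\<forall>i<m. x i = z i"
  using assms
proof (induction m arbitrary: x z)
  case 0
  then show ?case by simp
next
  case (Suc m)
  have shift: "(\<Sum>i<Suc m. f i * b ^ i) = f 0 + b * (\<Sum>i<m. f (Suc i) * b ^ i)" for f
    by (subst sum.lessThan_Suc_shift) (simp add: sum_distrib_left algebra_simps)
  have "x 0 < b" and "z 0 < b"
    using Suc.prems by auto
  have eq: "x 0 + b * (\<Sum>i<m. x (Suc i) * b ^ i) = z 0 + b * (\<Sum>i<m. z (Suc i) * b ^ i)"
    using Suc.prems(3) by (simp only: shift)
  have head: "x 0 = z 0"
    using arg_cong[OF eq, of "\<lambda>t. t mod b"] \<open>x 0 < b\<close> \<open>z 0 < b\<close> by simp
  have "(\<Sum>i<m. x (Suc i) * b ^ i) = (\<Sum>i<m. z (Suc i) * b ^ i)"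
    using arg_cong[OF eq, of "\<lambda>t. t div b"] \<open>x 0 < b\<close> \<open>z 0 < b\<close> by simp
  moreover have "\<forall>i<m. x (Suc i) < b" and "\<forall>i<m. z (Suc i) < b"
    using Suc.prems(1,2) by simp_all
  ultimately have "\<forall>i<m. x (Suc i) = z (Suc i)"
    using Suc.IH[of "\<lambda>i. x (Suc i)" "\<lambda>i. z (Suc i)"] by blast
  with head show ?case
    by (auto simp: less_Suc_eq_0_disj)
qed

lemma product_carries:
  assumes "\<forall>i\<le>k. x i < b" and "\<forall>i\<le>k. y i < b"
    and "digval b k x = n * digval b k y"
  shows "\<forall>i\<le>k. n * y i + carry n b y i = x i + b * carry n b y (Suc i)"
    and "carry n b y (Suc k) = 0"
proof -
  let ?r = "\<lambda>i. (n * y i + carry n b y i) mod b"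
  have expansion: "(\<Sum>i<Suc k. x i * b ^ i) =
      (\<Sum>i<Suc k. ?r i * b ^ i) + carry n b y (Suc k) * b ^ Suc k"
    using assms(3) carry_mult_expansion[where m="Suc k"]
    by (simp add: digval_def lessThan_Suc_atMost)
  moreover have "(\<Sum>i<Suc k. x i * b ^ i) < b ^ Suc k"
    using assms(1) by (intro base_sum_less) auto
  ultimately show final: "carry n b y (Suc k) = 0"
    by (cases "carry n b y (Suc k)") auto
  have "\<forall>i<Suc k. x i = ?r i"
    using expansion assms(1,2) final by (intro base_digits_unique) auto
  then show "\<forall>i\<le>k. n * y i + carry n b y i = x i + b * carry n b y (Suc i)"
    by simp
qed

lemma incoming_carry_unique:
  assumes "a + c = x + b * c'" and "a + e = x + b * e'"
    and "c < b" and "(e::nat) < b"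
  shows "c = e"
proof -
  have "c + b * e' = e + b * c'"
    using assms(1,2) by linarith
  from arg_cong[OF this, of "\<lambda>t. t mod b"] show ?thesis
    using assms(3,4) by simp
qed

lemma digits_comp_permutes:
  assumes "\<forall>i\<le>k. d i < b" and "p permutes {..k}"
  shows "\<forall>i\<le>k. (d \<circ> p) i < b"
  using assms permutes_in_image[OF assms(2)] by simp

lemma carry_reorder:
  assumes "0 < n" and "n < b"
    and x: "\<forall>i\<le>k. x i < b" and y: "\<forall>i\<le>k. y i < b"
    and product: "digval b k x = n * digval b k y"
    and \<phi>: "\<phi> permutes {..k}"
    and product_reordered: "digval b k (x \<circ> \<phi>) = n * digval b k (y \<circ> \<phi>)"
    and "i \<le> k"
  shows "carry n b (y \<circ> \<phi>) i = carry n b y (\<phi> i)"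
proof -
  have "\<phi> i \<le> k"
    using permutes_in_image[OF \<phi>] \<open>i \<le> k\<close> by simp
  note x_reordered = digits_comp_permutes[OF x \<phi>]
    and y_reordered = digits_comp_permutes[OF y \<phi>]
  have step: "n * y (\<phi> i) + carry n b y (\<phi> i) = x (\<phi> i) + b * carry n b y (Suc (\<phi> i))"
    using product_carries(1)[OF x y product] \<open>\<phi> i \<le> k\<close> by blast
  have step_reordered:
    "n * y (\<phi> i) + carry n b (y \<circ> \<phi>) i = x (\<phi> i) + b * carry n b (y \<circ> \<phi>) (Suc i)"
    using product_carries(1)[OF x_reordered y_reordered product_reordered] \<open>i \<le> k\<close> by simp
  have "carry n b y (\<phi> i) < n"
    using y \<open>\<phi> i \<le> k\<close> by (intro carry_less[OF assms(1)]) simp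
  moreover have "carry n b (y \<circ> \<phi>) i < n"
    using y_reordered \<open>i \<le> k\<close> by (intro carry_less[OF assms(1)]) simp
  ultimately show ?thesis
    using incoming_carry_unique[OF step_reordered step] assms(2) by simp
qed

lemma state_transitions_map:
  "state_transitions n b (map (\<lambda>i. (x i, y i)) [0..<m]) =
     map (\<lambda>i. (carry n b y i, carry n b y (Suc i))) [0..<m]"
proof -
  have "word_carry n b (map (\<lambda>i. (x i, y i)) [0..<m]) i = carry n b y i" if "i \<le> m" for i
    unfolding word_carry_eq_carry using that by (intro carry_cong) simp
  then show ?thesis
    unfolding state_transitions_def by (intro map_cong) (simp_all del: word_carry.simps)
qed

lemma cyclic_transitions:
  assumes "\<And>i. i \<le> k \<Longrightarrow> f i = g i" and "f (Suc k) = g 0"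
  shows "map (\<lambda>i. (f i, f (Suc i))) [0..<Suc k] = map (\<lambda>i. (g i, g ((i + 1) mod (k + 1)))) [0..<Suc k]"
proof (intro map_cong refl)
  fix i
  assume "i \<in> set [0..<Suc k]"
  then have "i \<le> k"
    by (simp del: upt_Suc)
  then show "(f i, f (Suc i)) = (g i, g ((i + 1) mod (k + 1)))"
    using assms by (cases "i = k") simp_all
qed

theorem corollary25:
  fixes n b k :: nat and \<sigma> \<phi> d :: "nat \<Rightarrow> nat"
  assumes "1 < n" and "n < b"
    and "is_permutiple n b k \<sigma> d"
    and "is_symmetry n b k \<sigma> d \<phi>"
  shows "state_transitions n b (map (\<lambda>i. (d (\<phi> i), d (\<sigma> (\<phi> i)))) [0..<Suc k])
       = map (\<lambda>i. (perm_carry n b \<sigma> d (\<phi> i), perm_carry n b \<sigma> d (\<phi> ((i + 1) mod (k + 1)))))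
             [0..<Suc k]"
proof -
  have digits: "\<forall>i\<le>k. d i < b" and \<sigma>: "\<sigma> permutes {..k}"
    and product: "digval b k d = n * digval b k (d \<circ> \<sigma>)"
    using assms(3) by (auto simp: is_permutiple_def)
  have \<phi>: "\<phi> permutes {..k}"
    and product_sym: "digval b k (d \<circ> \<phi>) = n * digval b k (d \<circ> \<sigma> \<circ> \<phi>)"
    using assms(4) by (auto simp: is_symmetry_def)
  have \<sigma>_digits: "\<forall>i\<le>k. (d \<circ> \<sigma>) i < b"
    using digits \<sigma> by (rule digits_comp_permutes)
  have reorder: "carry n b (d \<circ> \<sigma> \<circ> \<phi>) i = perm_carry n b \<sigma> d (\<phi> i)" if "i \<le> k" for i
    using carry_reorder[OF _ assms(2) digits \<sigma>_digits product \<phi> product_sym that] assms(1)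
    by (simp add: perm_carry_eq_carry)
  have closing: "carry n b (d \<circ> \<sigma> \<circ> \<phi>) (Suc k) = perm_carry n b \<sigma> d (\<phi> 0)"
    using product_carries(2)[OF digits_comp_permutes[OF digits \<phi>]
        digits_comp_permutes[OF \<sigma>_digits \<phi>] product_sym] reorder[of 0]
    by simp
  show ?thesis
    unfolding state_transitions_map
    by (rule cyclic_transitions[OF reorder closing, unfolded comp_def])
qed

end
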